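(* Let $\mathfrak m_1,\mathfrak m_1^*,\mathfrak m_2,\mathfrak m_2^*$ be complex-valued functions on the edges of the lattice strip, and $\phi_j=\int_{\gamma_0}\big(\mathfrak m_j(z)\psi(z)\,dz+\mathfrak m_j^*(z)\psi^*(z)\,d\bar z\big)$ for $j=1,2$. Then $$\phi_1\phi_2+\phi_2\phi_1=\Big(\int_{\gamma_0}\big(-2\,\mathfrak m_1(z)\mathfrak m_2(z)\,dz+2\,\mathfrak m_1^*(z)\mathfrak m_2^*(z)\,d\bar z\big)\Big)\,\mathrm{id}.$$
   Context: Fix integers $a<0<b$, $C=\{a,\dots,b\}$, $C^*=\{a+\frac12,\dots,b-\frac12\}$. $\tilde V$ has basis $(e_\rho)_{\rho\in\{\pm1\}^C}$. For $x'\in C^*$, $\varsigma_{x'}(\rho)$ flips the signs of $\rho_x$ for $x<x'$; $\psi_{x'}e_\rho=\frac{-\rho_{x'-1/2}+i\rho_{x'+1/2}}{\sqrt2}e_{\varsigma_{x'}(\rho)}$, $\psi^*_{x'}e_\rho=\frac{-i\rho_{x'-1/2}+\rho_{x'+1/2}}{\sqrt2}e_{\varsigma_{x'}(\rho)}$. The lattice strip has vertices $C\times\mathbb Z\subset\mathbb C$ and nearest-neighbour edges identified with midpoints; on horizontal edges $x'\in C^*$ at height 0, $\psi(x')=\psi_{x'}$, $\psi^*(x')=\psi^*_{x'}$. $\gamma_0=(a,a+1,\dots,b)$, and for a contour $(w_0,\dots,w_m)$ with $z_j$ the edge joining $w_{j-1},w_j$, $\int(\mathfrak m\psi\,dz+\mathfrak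 m^*\psi^*\,d\bar z)=\sum_j(\mathfrak m(z_j)\psi(z_j)(w_j-w_{j-1})+\mathfrak m^*(z_j)\psi^*(z_j)\overline{(w_j-w_{j-1})})$; scalar integrals $\int(g\,dz+h\,d\bar z)=\sum_j(g(z_j)(w_j-w_{j-1})+h(z_j)\overline{(w_j-w_{j-1})})$. *)

theory Defs
  imports Complex_Main
begin

text \<open>Spin configurations \<rho> \<in> {+1,-1}^C, C = {a..b}, encoded as functions
  int \<Rightarrow> int taking values in {-1,1} on C and the (irrelevant) value 1 off C.\<close>
definition configs :: "int \<Rightarrow> int \<Rightarrow> (int \<Rightarrow> int) set" where
  "configs a b = {\<rho>. \<forall>x. (x \<in> {a..b} \<longrightarrow> \<rho> x \<in> {-1, 1}) \<and> (x \<notin> {a..b} \<longrightarrow> \<rho> x = 1)}"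

type_synonym vec = "(int \<Rightarrow> int) \<Rightarrow> complex"
type_synonym op = "vec \<Rightarrow> vec"

definition Vt :: "int \<Rightarrow> int \<Rightarrow> vec set" where
  "Vt a b = {v. \<forall>\<rho>. \<rho> \<notin> configs a b \<longrightarrow> v \<rho> = 0}"

text \<open>A half-integer x' = k + 1/2 of C* is indexed by its integer part k \<in> {a..b-1}.
  varsigma flips \<rho>_x for all x \<in> C with x < k + 1/2, i.e. a \<le> x \<le> k.\<close>
definition varsigma :: "int \<Rightarrow> int \<Rightarrow> (int \<Rightarrow> int) \<Rightarrow> (int \<Rightarrow> int)" where
  "varsigma a k \<rho> = (\<lambda>x. if a \<le> x \<and> x \<le> k then - \<rho> x else \<rho> x)"

definition psi_coef :: "int \<Rightarrow> (int \<Rightarrow> int) \<Rightarrow> complex" where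
  "psi_coef k \<rho> = (- of_int (\<rho> k) + \<i> * of_int (\<rho> (k+1))) / sqrt 2"

definition psis_coef :: "int \<Rightarrow> (int \<Rightarrow> int) \<Rightarrow> complex" where
  "psis_coef k \<rho> = (- \<i> * of_int (\<rho> k) + of_int (\<rho> (k+1))) / sqrt 2"

text \<open>Linear extension of e_\<rho> \<mapsto> c(\<rho>) e_{\<varsigma>(\<rho>)}: since \<varsigma> is an involution of the
  configurations, the coefficient of e_\<sigma> in the image of v is c(\<varsigma> \<sigma>) v(\<varsigma> \<sigma>).\<close>
definition psi_op :: "int \<Rightarrow> int \<Rightarrow> int \<Rightarrow> op" where
  "psi_op a b k v = (\<lambda>\<sigma>. if \<sigma> \<in> configs a b
      then psi_coef k (varsigma a k \<sigma>) * v (varsigma a k \<sigma>) else 0)"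

definition psis_op :: "int \<Rightarrow> int \<Rightarrow> int \<Rightarrow> op" where
  "psis_op a b k v = (\<lambda>\<sigma>. if \<sigma> \<in> configs a b
      then psis_coef k (varsigma a k \<sigma>) * v (varsigma a k \<sigma>) else 0)"

text \<open>The fields \<psi>(z), \<psi>*(z) on edges (identified with midpoints z \<in> \<complex>); only the horizontal
  edges x' \<in> C* at height 0 are specified, elsewhere we put the zero operator (not used).\<close>
definition on_Cstar :: "int \<Rightarrow> int \<Rightarrow> complex \<Rightarrow> bool" where
  "on_Cstar a b z \<longleftrightarrow> (\<exists>k\<in>{a..b-1}. z = of_int k + 1/2)"

definition psi_field :: "int \<Rightarrow> int \<Rightarrow> complex \<Rightarrow> op" where
  "psi_field a b z = (if on_Cstar a b z then psi_op a b \<lfloor>Re z\<rfloor> else (\<lambda>v \<sigma>. 0))"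

definition psis_field :: "int \<Rightarrow> int \<Rightarrow> complex \<Rightarrow> op" where
  "psis_field a b z = (if on_Cstar a b z then psis_op a b \<lfloor>Re z\<rfloor> else (\<lambda>v \<sigma>. 0))"

text \<open>Contours as vertex lists (w_0,...,w_m); z_j the midpoint of the j-th edge.\<close>
definition gamma0 :: "int \<Rightarrow> int \<Rightarrow> complex list" where
  "gamma0 a b = map of_int [a..b]"

definition edge_mid :: "complex list \<Rightarrow> nat \<Rightarrow> complex" where
  "edge_mid ws j = (ws ! (j-1) + ws ! j) / 2"

definition edge_step :: "complex list \<Rightarrow> nat \<Rightarrow> complex" where
  "edge_step ws j = ws ! j - ws ! (j-1)"

definition op_integral ::
  "(complex \<Rightarrow> complex) \<Rightarrow> (complex \<Rightarrow> op) \<Rightarrow> (complex \<Rightarrow> complex) \<Rightarrow> (complex \<Rightarrow> op)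
    \<Rightarrow> complex list \<Rightarrow> op" where
  "op_integral m \<Psi> ms \<Psi>s ws v = (\<lambda>\<sigma>. \<Sum>j\<in>{1..<length ws}.
      m (edge_mid ws j) * edge_step ws j * \<Psi> (edge_mid ws j) v \<sigma>
    + ms (edge_mid ws j) * cnj (edge_step ws j) * \<Psi>s (edge_mid ws j) v \<sigma>)"

definition scalar_integral ::
  "(complex \<Rightarrow> complex) \<Rightarrow> (complex \<Rightarrow> complex) \<Rightarrow> complex list \<Rightarrow> complex" where
  "scalar_integral g h ws = (\<Sum>j\<in>{1..<length ws}.
      g (edge_mid ws j) * edge_step ws j + h (edge_mid ws j) * cnj (edge_step ws j))"

end

theory Submission
  imports Defs
begin

text \<open>On \<gamma>0 the integral \<phi> is the sum over the edges k + 1/2 of the local operators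
  m(k + 1/2) \<psi>_k + m*(k + 1/2) \<psi>*_k, so the claim reduces to anticommutation relations
  between them. Each of \<psi>_k, \<psi>*_k is a coefficient times the spin flip \<varsigma>_k, and the flips
  commute. For k < l the flip \<varsigma>_l reverses both spins \<rho>_k, \<rho>_(k+1) and hence the sign of
  the coefficient at k, while \<varsigma>_k leaves \<rho>_l, \<rho>_(l+1) alone: operators at distinct edges
  anticommute. At a single edge, \<psi>_k\<psi>_k = -id, \<psi>*_k\<psi>*_k = id and \<psi>_k\<psi>*_k + \<psi>*_k\<psi>_k = 0
  follow from \<rho>_k^2 = \<rho>_(k+1)^2 = 1.\<close>

definition field_coef :: "int \<Rightarrow> complex \<Rightarrow> complex \<Rightarrow> (int \<Rightarrow> int) \<Rightarrow> complex" where
  "field_coef k \<alpha> \<beta> \<rho> = \<alpha> * psi_coef k \<rho> + \<beta> * psis_coef k \<rho>"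

definition field_op :: "int \<Rightarrow> int \<Rightarrow> int \<Rightarrow> complex \<Rightarrow> complex \<Rightarrow> op" where
  "field_op a b k \<alpha> \<beta> v = (\<lambda>\<sigma>. if \<sigma> \<in> configs a b
      then field_coef k \<alpha> \<beta> (varsigma a k \<sigma>) * v (varsigma a k \<sigma>) else 0)"

lemma field_op_eq_psi_op_psis_op:
  "field_op a b k \<alpha> \<beta> v \<sigma> = \<alpha> * psi_op a b k v \<sigma> + \<beta> * psis_op a b k v \<sigma>"
  by (simp add: field_op_def psi_op_def psis_op_def field_coef_def algebra_simps)

lemma field_op_sum:
  "field_op a b k \<alpha> \<beta> (\<lambda>\<sigma>. \<Sum>l\<in>L. f l \<sigma>) \<sigma> = (\<Sum>l\<in>L. field_op a b k \<alpha> \<beta> (f l) \<sigma>)"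
  by (simp add: field_op_def sum_distrib_left)

lemma varsigma_varsigma_same [simp]: "varsigma a k (varsigma a k \<sigma>) = \<sigma>"
  by (auto simp: varsigma_def)

lemma varsigma_commute: "varsigma a k (varsigma a l \<sigma>) = varsigma a l (varsigma a k \<sigma>)"
  by (auto simp: varsigma_def)

lemma varsigma_in_configs: "\<sigma> \<in> configs a b \<Longrightarrow> k \<le> b \<Longrightarrow> varsigma a k \<sigma> \<in> configs a b"
  by (auto simp: varsigma_def configs_def)

lemma field_op_field_op:
  assumes "\<sigma> \<in> configs a b" "k \<le> b"
  shows "field_op a b k \<alpha> \<beta> (field_op a b l \<gamma> \<delta> v) \<sigma>
     = field_coef k \<alpha> \<beta> (varsigma a k \<sigma>) * field_coef l \<gamma> \<delta> (varsigma a l (varsigma a k \<sigma>))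
       * v (varsigma a l (varsigma a k \<sigma>))"
  using assms varsigma_in_configs[OF assms] by (simp add: field_op_def)

lemma anticomm_coef_identity:
  fixes A B \<alpha> \<beta> \<gamma> \<delta> :: complex
  assumes "A * A = 1" "B * B = 1"
  shows "(\<alpha> * (A + \<i> * B) + \<beta> * (\<i> * A + B)) * (\<gamma> * (- A + \<i> * B) + \<delta> * (- \<i> * A + B))
       + (\<gamma> * (A + \<i> * B) + \<delta> * (\<i> * A + B)) * (\<alpha> * (- A + \<i> * B) + \<beta> * (- \<i> * A + B))
       = 2 * (-2 * \<alpha> * \<gamma> + 2 * \<beta> * \<delta>)"
proof -
  have "\<i> * \<i> = (-1::complex)" by simp
  then show ?thesis using assms by algebra
qed

lemma field_coef_anticomm_same_edge:
  assumes "\<sigma> \<in> configs a b" "k \<in> {a..b-1}"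
  shows "field_coef k \<alpha> \<beta> (varsigma a k \<sigma>) * field_coef k \<gamma> \<delta> \<sigma>
       + field_coef k \<gamma> \<delta> (varsigma a k \<sigma>) * field_coef k \<alpha> \<beta> \<sigma>
     = -2 * \<alpha> * \<gamma> + 2 * \<beta> * \<delta>"
proof -
  define A where "A = complex_of_int (\<sigma> k)"
  define B where "B = complex_of_int (\<sigma> (k + 1))"
  have "\<sigma> k \<in> {-1, 1}" "\<sigma> (k + 1) \<in> {-1, 1}"
    using assms by (auto simp: configs_def)
  then have squares: "A * A = 1" "B * B = 1"
    by (auto simp: A_def B_def)
  have flipped: "field_coef k x y (varsigma a k \<sigma>) = (x * (A + \<i> * B) + y * (\<i> * A + B)) / sqrt 2"
    for x y
    using assms(2)
    by (simp add: field_coef_def psi_coef_def psis_coef_def varsigma_def A_def B_def field_simps)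
  have unflipped: "field_coef k x y \<sigma> = (x * (- A + \<i> * B) + y * (- \<i> * A + B)) / sqrt 2" for x y
    by (simp add: field_coef_def psi_coef_def psis_coef_def A_def B_def field_simps)
  have sqrt2: "complex_of_real (sqrt 2) * complex_of_real (sqrt 2) = 2"
    by (simp flip: of_real_mult)
  show ?thesis
    unfolding flipped unflipped times_divide_times_eq add_divide_distrib[symmetric]
      anticomm_coef_identity[OF squares] sqrt2
    by simp
qed

lemma field_coef_anticomm_distinct_edges:
  assumes "a \<le> k" "k < l"
  shows "field_coef k \<alpha> \<beta> (varsigma a k \<sigma>) * field_coef l \<gamma> \<delta> (varsigma a l (varsigma a k \<sigma>))
       + field_coef l \<gamma> \<delta> (varsigma a l \<sigma>) * field_coef k \<alpha> \<beta> (varsigma a k (varsigma a l \<sigma>)) = 0"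
proof -
  have "field_coef l \<gamma> \<delta> (varsigma a l (varsigma a k \<sigma>)) = field_coef l \<gamma> \<delta> (varsigma a l \<sigma>)"
    using assms by (simp add: field_coef_def psi_coef_def psis_coef_def varsigma_def)
  moreover have "field_coef k \<alpha> \<beta> (varsigma a k (varsigma a l \<sigma>)) = - field_coef k \<alpha> \<beta> (varsigma a k \<sigma>)"
    using assms by (simp add: field_coef_def psi_coef_def psis_coef_def varsigma_def field_simps)
  ultimately show ?thesis by simp
qed

lemma field_op_anticomm_same_edge:
  assumes "v \<in> Vt a b" "k \<in> {a..b-1}"
  shows "field_op a b k \<alpha> \<beta> (field_op a b k \<gamma> \<delta> v) \<sigma> + field_op a b k \<gamma> \<delta> (field_op a b k \<alpha> \<beta> v) \<sigma>
     = (-2 * \<alpha> * \<gamma> + 2 * \<beta> * \<delta>) * v \<sigma>"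
proof (cases "\<sigma> \<in> configs a b")
  case True
  have "field_op a b k \<alpha> \<beta> (field_op a b k \<gamma> \<delta> v) \<sigma> + field_op a b k \<gamma> \<delta> (field_op a b k \<alpha> \<beta> v) \<sigma>
      = (field_coef k \<alpha> \<beta> (varsigma a k \<sigma>) * field_coef k \<gamma> \<delta> \<sigma>
       + field_coef k \<gamma> \<delta> (varsigma a k \<sigma>) * field_coef k \<alpha> \<beta> \<sigma>) * v \<sigma>"
    using True assms(2) by (simp add: field_op_field_op algebra_simps)
  then show ?thesis
    using field_coef_anticomm_same_edge[OF True assms(2)] by simp
qed (use assms(1) in \<open>simp add: field_op_def Vt_def\<close>)

lemma field_op_anticomm_distinct_edges:
  assumes "a \<le> k" "k < l" "l \<le> b"
  shows "field_op a b k \<alpha> \<beta> (field_op a b l \<gamma> \<delta> v) \<sigma> + field_op a b l \<gamma> \<delta> (field_op a b k \<alpha> \<beta> v) \<sigma> = 0"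
proof (cases "\<sigma> \<in> configs a b")
  case True
  have "field_op a b k \<alpha> \<beta> (field_op a b l \<gamma> \<delta> v) \<sigma> + field_op a b l \<gamma> \<delta> (field_op a b k \<alpha> \<beta> v) \<sigma>
      = (field_coef k \<alpha> \<beta> (varsigma a k \<sigma>) * field_coef l \<gamma> \<delta> (varsigma a l (varsigma a k \<sigma>))
       + field_coef l \<gamma> \<delta> (varsigma a l \<sigma>) * field_coef k \<alpha> \<beta> (varsigma a k (varsigma a l \<sigma>)))
        * v (varsigma a l (varsigma a k \<sigma>))"
    using True assms by (simp add: field_op_field_op varsigma_commute[of a k l] algebra_simps)
  then show ?thesis
    using field_coef_anticomm_distinct_edges[OF assms(1,2)] by simp
qed (simp add: field_op_def)

lemma field_op_anticomm:
  assumes "v \<in> Vt a b" "k \<in> {a..b-1}" "l \<in> {a..b-1}"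
  shows "field_op a b k \<alpha> \<beta> (field_op a b l \<gamma> \<delta> v) \<sigma> + field_op a b l \<gamma> \<delta> (field_op a b k \<alpha> \<beta> v) \<sigma>
     = (if k = l then (-2 * \<alpha> * \<gamma> + 2 * \<beta> * \<delta>) * v \<sigma> else 0)"
proof -
  consider "k = l" | "k < l" | "l < k" by fastforce
  then show ?thesis
  proof cases
    case 1
    then show ?thesis using field_op_anticomm_same_edge[OF assms(1,2)] by simp
  next
    case 2
    then show ?thesis using field_op_anticomm_distinct_edges[of a k l b] assms(2,3) by simp
  next
    case 3
    then show ?thesis using field_op_anticomm_distinct_edges[of a l k b] assms(2,3) by (simp add: add.commute)
  qed
qed

lemma field_op_sums_anticomm:
  assumes "v \<in> Vt a b" "K \<subseteq> {a..b-1}"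
  shows "(\<Sum>k\<in>K. field_op a b k (\<alpha> k) (\<beta> k) (\<lambda>\<sigma>. \<Sum>l\<in>K. field_op a b l (\<gamma> l) (\<delta> l) v \<sigma>) \<sigma>)
       + (\<Sum>l\<in>K. field_op a b l (\<gamma> l) (\<delta> l) (\<lambda>\<sigma>. \<Sum>k\<in>K. field_op a b k (\<alpha> k) (\<beta> k) v \<sigma>) \<sigma>)
     = (\<Sum>k\<in>K. -2 * \<alpha> k * \<gamma> k + 2 * \<beta> k * \<delta> k) * v \<sigma>"
proof -
  have "finite K" using assms(2) finite_subset by blast
  have "(\<Sum>k\<in>K. field_op a b k (\<alpha> k) (\<beta> k) (\<lambda>\<sigma>. \<Sum>l\<in>K. field_op a b l (\<gamma> l) (\<delta> l) v \<sigma>) \<sigma>)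
       + (\<Sum>l\<in>K. field_op a b l (\<gamma> l) (\<delta> l) (\<lambda>\<sigma>. \<Sum>k\<in>K. field_op a b k (\<alpha> k) (\<beta> k) v \<sigma>) \<sigma>)
     = (\<Sum>k\<in>K. \<Sum>l\<in>K. field_op a b k (\<alpha> k) (\<beta> k) (field_op a b l (\<gamma> l) (\<delta> l) v) \<sigma>
         + field_op a b l (\<gamma> l) (\<delta> l) (field_op a b k (\<alpha> k) (\<beta> k) v) \<sigma>)"
    unfolding field_op_sum sum.distrib
    by (subst (2) sum.swap) (rule refl)
  also have "\<dots> = (\<Sum>k\<in>K. \<Sum>l\<in>K. if k = l then (-2 * \<alpha> k * \<gamma> l + 2 * \<beta> k * \<delta> l) * v \<sigma> else 0)"
    using assms by (intro sum.cong[OF refl] field_op_anticomm) auto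
  also have "\<dots> = (\<Sum>k\<in>K. -2 * \<alpha> k * \<gamma> k + 2 * \<beta> k * \<delta> k) * v \<sigma>"
    using \<open>finite K\<close> by (simp add: sum_distrib_right)
  finally show ?thesis .
qed

lemma sum_gamma0_edges:
  "(\<Sum>j\<in>{1..<length (gamma0 a b)}. F (edge_mid (gamma0 a b) j) (edge_step (gamma0 a b) j))
     = (\<Sum>k\<in>{a..b-1}. F (of_int k + 1/2) 1)"
proof (rule sum.reindex_bij_witness[where i = "\<lambda>k. nat (k - a + 1)" and j = "\<lambda>j. a + int j - 1"])
  fix j assume j: "j \<in> {1..<length (gamma0 a b)}"
  then show "nat (a + int j - 1 - a + 1) = j" "a + int j - 1 \<in> {a..b-1}"
    by (auto simp: gamma0_def)
  have vertices: "gamma0 a b ! j = of_int (a + int j)" "gamma0 a b ! (j - 1) = of_int (a + int j - 1)"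
    using j by (auto simp: gamma0_def nth_upto of_nat_diff)
  have "edge_mid (gamma0 a b) j = of_int (a + int j - 1) + 1/2" "edge_step (gamma0 a b) j = 1"
    unfolding edge_mid_def edge_step_def vertices by (simp_all add: field_simps)
  then show "F (of_int (a + int j - 1) + 1 / 2) 1 = F (edge_mid (gamma0 a b) j) (edge_step (gamma0 a b) j)"
    by simp
qed (auto simp: gamma0_def)

lemma on_Cstar_midpoint: "k \<in> {a..b-1} \<Longrightarrow> on_Cstar a b (of_int k + 1/2)"
  unfolding on_Cstar_def by blast

lemma floor_Re_midpoint: "\<lfloor>Re (of_int k + 1/2 :: complex)\<rfloor> = k"
  by (simp add: floor_eq_iff)

lemma op_integral_gamma0:
  "op_integral m (psi_field a b) ms (psis_field a b) (gamma0 a b) v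
     = (\<lambda>\<sigma>. \<Sum>k\<in>{a..b-1}. field_op a b k (m (of_int k + 1/2)) (ms (of_int k + 1/2)) v \<sigma>)"
  unfolding op_integral_def sum_gamma0_edges[where F = "\<lambda>z s. m z * s * psi_field a b z v _
      + ms z * cnj s * psis_field a b z v _"]
  by (intro ext sum.cong refl)
    (simp add: psi_field_def psis_field_def on_Cstar_midpoint floor_Re_midpoint field_op_eq_psi_op_psis_op)

lemma scalar_integral_gamma0:
  "scalar_integral g h (gamma0 a b) = (\<Sum>k\<in>{a..b-1}. g (of_int k + 1/2) + h (of_int k + 1/2))"
  unfolding scalar_integral_def sum_gamma0_edges[where F = "\<lambda>z s. g z * s + h z * cnj s"] by simp

theorem proposition3p12:
  fixes a b :: int and m1 m1s m2 m2s :: "complex \<Rightarrow> complex"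
  assumes "a < 0" and "0 < b"
  defines "\<phi>1 \<equiv> op_integral m1 (psi_field a b) m1s (psis_field a b) (gamma0 a b)"
      and "\<phi>2 \<equiv> op_integral m2 (psi_field a b) m2s (psis_field a b) (gamma0 a b)"
  shows "\<forall>v\<in>Vt a b. (\<lambda>\<sigma>. \<phi>1 (\<phi>2 v) \<sigma> + \<phi>2 (\<phi>1 v) \<sigma>)
     = (\<lambda>\<sigma>. scalar_integral (\<lambda>z. -2 * m1 z * m2 z) (\<lambda>z. 2 * m1s z * m2s z) (gamma0 a b) * v \<sigma>)"
  unfolding \<phi>1_def \<phi>2_def op_integral_gamma0 scalar_integral_gamma0
  using field_op_sums_anticomm[where K = "{a..b-1}"] by (simp add: mult.assoc)

end
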